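(* For $k\in\mathbb Z\setminus\{0\}$: (i) if $\alpha\in(0,1)$, then $(2-2^{\alpha-1})^{-1}<c^-(k)+c^+(k)\le1$; (ii) if $\alpha\in(1,2)$, then $1\le c^-(k)+c^+(k)\le(2-2^{\alpha-1})^{-1}$.
   Context: $B_\alpha$ is fractional Brownian motion with $\mathrm{Cov}(B_\alpha(t),B_\alpha(s))=\frac{|t|^\alpha+|s|^\alpha-|t-s|^\alpha}{2}$, $\alpha\in(0,2)$; $Z_\alpha(t)=\sqrt2B_\alpha(t)-|t|^\alpha$. Let $\Sigma=\begin{pmatrix}2&2-2^\alpha\\2-2^\alpha&2\end{pmatrix}$ be the covariance matrix of $(Z_\alpha(-1),Z_\alpha(1))$. For $k\in\mathbb Z$, define $(c^-(k),c^+(k))^\top=\Sigma^{-1}\big(\mathrm{Cov}(Z_\alpha(k),Z_\alpha(-1)),\mathrm{Cov}(Z_\alpha(k),Z_\alpha(1))\big)^\top$. (Equivalently, $c^-(k)+c^+(k)=\frac{2+2|k|^\alpha-(|k|-1)^\alpha-(|k|+1)^\alpha}{4-2^\alpha}$ for $k\ne0$.) *)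

theory Defs
  imports Complex_Main
begin

text \<open>Covariance of Z_alpha(t) = sqrt 2 * B_alpha(t) - |t|^alpha, where B_alpha is
  fractional Brownian motion: Cov(Z(t),Z(s)) = 2 Cov(B(t),B(s)) = |t|^a + |s|^a - |t-s|^a.\<close>
definition covZ :: "real \<Rightarrow> real \<Rightarrow> real \<Rightarrow> real" where
  "covZ a t s = \<bar>t\<bar> powr a + \<bar>s\<bar> powr a - \<bar>t - s\<bar> powr a"

definition Sig11 :: "real \<Rightarrow> real" where "Sig11 a = covZ a (-1) (-1)"
definition Sig12 :: "real \<Rightarrow> real" where "Sig12 a = covZ a (-1) 1"
definition Sig21 :: "real \<Rightarrow> real" where "Sig21 a = covZ a 1 (-1)"
definition Sig22 :: "real \<Rightarrow> real" where "Sig22 a = covZ a 1 1"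
definition Sigdet :: "real \<Rightarrow> real" where
  "Sigdet a = Sig11 a * Sig22 a - Sig12 a * Sig21 a"

text \<open>(c^-(k), c^+(k))^T = Sigma^{-1} (Cov(Z(k),Z(-1)), Cov(Z(k),Z(1)))^T,
  with the 2x2 inverse written out explicitly.\<close>
definition c_minus :: "real \<Rightarrow> int \<Rightarrow> real" where
  "c_minus a k = (Sig22 a * covZ a (of_int k) (-1) - Sig12 a * covZ a (of_int k) 1) / Sigdet a"
definition c_plus :: "real \<Rightarrow> int \<Rightarrow> real" where
  "c_plus a k = (- Sig21 a * covZ a (of_int k) (-1) + Sig11 a * covZ a (of_int k) 1) / Sigdet a"

end

theory Submission
  imports Defs
begin

text \<open>With \<open>n = \<bar>k\<bar>\<close> one computes \<open>c\<^sup>-(k) + c\<^sup>+(k) = (2 - \<Delta>(n)) / (4 - 2\<^sup>\<alpha>)\<close>,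
  where \<open>\<Delta>(x) = (x+1)\<^sup>\<alpha> - 2x\<^sup>\<alpha> + (x-1)\<^sup>\<alpha>\<close> is the second difference of \<open>x\<^sup>\<alpha>\<close>, and
  \<open>1/(2 - 2\<^sup>\<alpha>\<^sup>-\<^sup>1) = 2/(4 - 2\<^sup>\<alpha>)\<close>. So everything reduces to bounds on \<open>\<Delta>\<close> over
  \<open>[1,\<infinity>)\<close>. By the mean value theorem \<open>\<Delta>\<close> has the sign of \<open>\<alpha>(\<alpha>-1)\<close>, and
  \<open>\<Delta>' = \<alpha> \<cdot> \<Delta>\<^sub>\<alpha>\<^sub>-\<^sub>1\<close> has the sign of \<open>(\<alpha>-1)(\<alpha>-2)\<close>; hence for \<open>\<alpha> < 1\<close> the function
  \<open>\<Delta>\<close> increases from \<open>\<Delta>(1) = 2\<^sup>\<alpha> - 2\<close> and stays negative, and for \<open>1 < \<alpha> < 2\<close> it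
  decreases from \<open>2\<^sup>\<alpha> - 2\<close> and stays positive.\<close>

lemma powr_mvt:
  fixes u v b :: real
  assumes "0 < u" "u < v"
  shows "\<exists>z. u < z \<and> z < v \<and> v powr b - u powr b = (v - u) * (b * z powr (b - 1))"
proof -
  have "\<And>t. u \<le> t \<Longrightarrow> t \<le> v \<Longrightarrow> ((\<lambda>t. t powr b) has_real_derivative b * t powr (b - 1)) (at t)"
    using assms by (auto intro!: has_real_derivative_powr)
  from MVT2[OF assms(2) this] show ?thesis
    by auto
qed

definition powr_second_diff :: "real \<Rightarrow> real \<Rightarrow> real" where
  "powr_second_diff b x = (x + 1) powr b - 2 * x powr b + (x - 1) powr b"

lemma powr_second_diff_mvt:
  fixes x b :: real
  assumes "x > 1"
  obtains p q where "x - 1 < p" "p < x" "x < q" "q < x + 1"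
    "powr_second_diff b x = b * q powr (b - 1) - b * p powr (b - 1)"
proof -
  obtain q where q: "x < q" "q < x + 1" "(x + 1) powr b - x powr b = (x + 1 - x) * (b * q powr (b - 1))"
    using powr_mvt[of x "x + 1" b] assms by auto
  obtain p where p: "x - 1 < p" "p < x" "x powr b - (x - 1) powr b = (x - (x - 1)) * (b * p powr (b - 1))"
    using powr_mvt[of "x - 1" x b] assms by auto
  show ?thesis
    using that[OF p(1,2) q(1,2)] p(3) q(3) by (simp add: powr_second_diff_def algebra_simps)
qed

lemma powr_second_diff_neg:
  fixes x b :: real
  assumes "x > 1" "0 < b" "b < 1"
  shows "powr_second_diff b x < 0"
proof -
  obtain p q where pq: "x - 1 < p" "p < x" "x < q" "q < x + 1"
    "powr_second_diff b x = b * q powr (b - 1) - b * p powr (b - 1)"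
    using powr_second_diff_mvt[OF assms(1)] by blast
  have "q powr (b - 1) < p powr (b - 1)"
    using pq assms by (intro powr_less_mono2_neg) auto
  then show ?thesis
    using pq(5) assms by simp
qed

lemma powr_second_diff_pos:
  fixes x b :: real
  assumes "x > 1" "b < 0 \<or> b > 1"
  shows "powr_second_diff b x > 0"
proof -
  obtain p q where pq: "x - 1 < p" "p < x" "x < q" "q < x + 1"
    "powr_second_diff b x = b * q powr (b - 1) - b * p powr (b - 1)"
    using powr_second_diff_mvt[OF assms(1)] by blast
  show ?thesis
  proof (cases "b < 0")
    case True
    have "q powr (b - 1) < p powr (b - 1)"
      using pq True assms by (intro powr_less_mono2_neg) auto
    then show ?thesis
      using pq(5) True by (simp add: mult_strict_left_mono_neg)
  next
    case False
    then have "b > 1"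
      using assms by auto
    have "p powr (b - 1) < q powr (b - 1)"
      using pq \<open>b > 1\<close> assms by (intro powr_less_mono2) auto
    then show ?thesis
      using pq(5) \<open>b > 1\<close> by simp
  qed
qed

lemma powr_second_diff_at_1: "b > 0 \<Longrightarrow> powr_second_diff b 1 = 2 powr b - 2"
  by (simp add: powr_second_diff_def)

lemma has_real_derivative_powr_second_diff:
  fixes b t :: real
  assumes "t > 1"
  shows "(powr_second_diff b has_real_derivative b * powr_second_diff (b - 1) t) (at t)"
proof -
  have "((\<lambda>t. (t + 1) powr b - 2 * t powr b + (t - 1) powr b) has_real_derivative
          b * (t + 1) powr (b - 1) * 1 - 2 * (b * t powr (b - 1)) + b * (t - 1) powr (b - 1) * 1) (at t)"
    using assms
    by (intro DERIV_add DERIV_diff DERIV_cmult DERIV_chain2[OF has_real_derivative_powr]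
          has_real_derivative_powr derivative_eq_intros) auto
  then show ?thesis
    unfolding powr_second_diff_def[abs_def] by (simp add: algebra_simps)
qed

lemma continuous_on_powr_second_diff: "b > 0 \<Longrightarrow> continuous_on {1..} (powr_second_diff b)"
  unfolding powr_second_diff_def[abs_def]
  by (intro continuous_intros continuous_on_powr') auto

lemma powr_second_diff_mono:
  fixes b x y :: real
  assumes "0 < b" "b < 1" "1 \<le> x" "x \<le> y"
  shows "powr_second_diff b x \<le> powr_second_diff b y"
proof (rule DERIV_nonneg_imp_increasing_open[OF assms(4)])
  fix t assume "x < t" "t < y"
  then have "DERIV (powr_second_diff b) t :> b * powr_second_diff (b - 1) t"
    and "b * powr_second_diff (b - 1) t \<ge> 0"
    using assms has_real_derivative_powr_second_diff powr_second_diff_pos[of t "b - 1"] by auto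
  then show "\<exists>d. DERIV (powr_second_diff b) t :> d \<and> d \<ge> 0"
    by blast
next
  show "continuous_on {x..y} (powr_second_diff b)"
    by (rule continuous_on_subset[OF continuous_on_powr_second_diff]) (use assms in auto)
qed

lemma powr_second_diff_antimono:
  fixes b x y :: real
  assumes "1 < b" "b < 2" "1 \<le> x" "x \<le> y"
  shows "powr_second_diff b y \<le> powr_second_diff b x"
proof (rule DERIV_nonpos_imp_decreasing_open[OF assms(4)])
  fix t assume "x < t" "t < y"
  then have "DERIV (powr_second_diff b) t :> b * powr_second_diff (b - 1) t"
    and "b * powr_second_diff (b - 1) t \<le> 0"
    using assms has_real_derivative_powr_second_diff powr_second_diff_neg[of t "b - 1"]
    by (auto intro: mult_nonneg_nonpos)
  then show "\<exists>d. DERIV (powr_second_diff b) t :> d \<and> d \<le> 0"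
    by blast
next
  show "continuous_on {x..y} (powr_second_diff b)"
    by (rule continuous_on_subset[OF continuous_on_powr_second_diff]) (use assms in auto)
qed

lemma powr_second_diff_neg_ge_1:
  fixes b x :: real
  assumes "0 < b" "b < 1" "1 \<le> x"
  shows "powr_second_diff b x < 0"
proof (cases "x = 1")
  case True
  have "2 powr b < 2 powr (1::real)"
    using assms by (intro powr_less_mono) auto
  then show ?thesis
    using True assms powr_second_diff_at_1 by simp
qed (use assms powr_second_diff_neg in auto)

lemma powr_second_diff_pos_ge_1:
  fixes b x :: real
  assumes "1 < b" "1 \<le> x"
  shows "powr_second_diff b x > 0"
proof (cases "x = 1")
  case True
  have "2 powr (1::real) < 2 powr b"
    using assms by (intro powr_less_mono) auto
  then show ?thesis
    using True assms powr_second_diff_at_1 by simp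
qed (use assms powr_second_diff_pos in auto)

lemma covZ_sum_at_pm1:
  fixes k :: int
  assumes "k \<noteq> 0"
  shows "covZ a (of_int k) (-1) + covZ a (of_int k) 1 = 2 - powr_second_diff a \<bar>of_int k\<bar>"
proof -
  have "\<bar>real_of_int k + 1\<bar> powr a + \<bar>real_of_int k - 1\<bar> powr a
          = (\<bar>of_int k\<bar> + 1) powr a + (\<bar>of_int k\<bar> - 1) powr a"
  proof (cases "k > 0")
    case True
    then have "\<bar>real_of_int k + 1\<bar> = \<bar>of_int k\<bar> + 1" "\<bar>real_of_int k - 1\<bar> = \<bar>of_int k\<bar> - 1"
      by auto
    then show ?thesis
      by simp
  next
    case False
    then have "\<bar>real_of_int k + 1\<bar> = \<bar>of_int k\<bar> - 1" "\<bar>real_of_int k - 1\<bar> = \<bar>of_int k\<bar> + 1"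
      using assms by auto
    then show ?thesis
      by simp
  qed
  then show ?thesis
    unfolding covZ_def powr_second_diff_def by (simp add: algebra_simps)
qed

lemma c_minus_plus_eq:
  fixes k :: int
  assumes "k \<noteq> 0"
  shows "c_minus a k + c_plus a k = (2 - powr_second_diff a \<bar>of_int k\<bar>) / (4 - 2 powr a)"
proof -
  have Sig: "Sig11 a = 2" "Sig22 a = 2" "Sig12 a = 2 - 2 powr a" "Sig21 a = 2 - 2 powr a"
    by (simp_all add: Sig11_def Sig22_def Sig12_def Sig21_def covZ_def)
  have det: "Sigdet a = 2 powr a * (4 - 2 powr a)"
    unfolding Sigdet_def Sig by (simp add: algebra_simps)
  have "c_minus a k + c_plus a k
          = 2 powr a * (covZ a (of_int k) (-1) + covZ a (of_int k) 1) / (2 powr a * (4 - 2 powr a))"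
    unfolding c_minus_def c_plus_def Sig det by (simp add: add_divide_distrib[symmetric] algebra_simps)
  also have "\<dots> = (covZ a (of_int k) (-1) + covZ a (of_int k) 1) / (4 - 2 powr a)"
    by simp
  finally show ?thesis
    using covZ_sum_at_pm1[OF assms] by simp
qed

theorem lemma3p7:
  fixes a :: real and k :: int
  assumes "k \<noteq> 0"
  shows "(0 < a \<and> a < 1 \<longrightarrow>
            1 / (2 - 2 powr (a - 1)) < c_minus a k + c_plus a k \<and> c_minus a k + c_plus a k \<le> 1)
       \<and> (1 < a \<and> a < 2 \<longrightarrow>
            1 \<le> c_minus a k + c_plus a k \<and> c_minus a k + c_plus a k \<le> 1 / (2 - 2 powr (a - 1)))"
proof -
  define n where "n = \<bar>real_of_int k\<bar>"
  have n: "1 \<le> n"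
    using assms unfolding n_def by linarith
  have bound: "1 / (2 - 2 powr (a - 1)) = 2 / (4 - 2 powr a)"
    by (simp add: powr_diff field_simps)
  have sum: "c_minus a k + c_plus a k = (2 - powr_second_diff a n) / (4 - 2 powr a)"
    using c_minus_plus_eq[OF assms] unfolding n_def .
  have denom: "0 < 4 - 2 powr a" if "a < 2"
    using powr_less_mono[OF that, of 2] by simp
  show ?thesis
  proof (intro conjI impI; elim conjE)
    assume a: "0 < a" "a < 1"
    then show "1 / (2 - 2 powr (a - 1)) < c_minus a k + c_plus a k"
      unfolding bound sum using denom powr_second_diff_neg_ge_1[OF a n] by (simp add: divide_strict_right_mono)
    show "c_minus a k + c_plus a k \<le> 1"
      unfolding sum using a denom powr_second_diff_mono[OF a order_refl n] powr_second_diff_at_1 by simp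
  next
    assume a: "1 < a" "a < 2"
    then show "1 \<le> c_minus a k + c_plus a k"
      unfolding sum using denom powr_second_diff_antimono[OF a order_refl n] powr_second_diff_at_1 by simp
    show "c_minus a k + c_plus a k \<le> 1 / (2 - 2 powr (a - 1))"
      unfolding bound sum using a denom powr_second_diff_pos_ge_1[OF a(1) n]
      by (simp add: divide_right_mono)
  qed
qed

end
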